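(* Let $\mathbb{Z}[s,u]$ be the polynomial ring in variables $s$ (of degree $4$) and $u$ (of degree $2$). Let $I_2=(3u^4-3su^2+s^2,\ u^6)$ and $J_2=(s^2+su^2+u^4,\ u^6)$. Then the graded rings $\mathbb{Z}[s,u]/I_2$ and $\mathbb{Z}[s,u]/J_2$ are isomorphic.
   Context: In the paper $s$ is written $y_1^2$ with $y_1$ of degree $2$. *)

theory Defs
  imports "HOL-Algebra.UnivPoly" "HOL-Algebra.QuotRing" "HOL-Algebra.IntRing"
begin

text \<open>The polynomial ring Z[s,u] is realised as (Z[s])[u]:
  Zs = Z[s], and ZSU = Zs[u].\<close>

abbreviation Zs where "Zs \<equiv> UP INTEG"
abbreviation ZSU where "ZSU \<equiv> UP Zs"

definition s_var :: "nat \<Rightarrow> nat \<Rightarrow> int" where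
  "s_var = monom ZSU (monom Zs 1 1) 0"

definition u_var :: "nat \<Rightarrow> nat \<Rightarrow> int" where
  "u_var = monom ZSU \<one>\<^bsub>Zs\<^esub> 1"

definition homogeneous :: "nat \<Rightarrow> (nat \<Rightarrow> nat \<Rightarrow> int) \<Rightarrow> bool" where
  "homogeneous d p \<longleftrightarrow> p \<in> carrier ZSU \<and>
     (\<forall>i j. coeff Zs (coeff ZSU p j) i \<noteq> 0 \<longrightarrow> 4 * i + 2 * j = d)"

definition quot_grade :: "(nat \<Rightarrow> nat \<Rightarrow> int) set \<Rightarrow> nat \<Rightarrow> (nat \<Rightarrow> nat \<Rightarrow> int) set set" where
  "quot_grade I d = (\<lambda>p. a_r_coset ZSU I p) ` {p. homogeneous d p}"

definition graded_quot_iso ::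
  "(nat \<Rightarrow> nat \<Rightarrow> int) set \<Rightarrow> (nat \<Rightarrow> nat \<Rightarrow> int) set \<Rightarrow> bool" where
  "graded_quot_iso I J \<longleftrightarrow>
     (\<exists>h \<in> ring_iso (ZSU Quot I) (ZSU Quot J).
        \<forall>d. h ` quot_grade I d = quot_grade J d)"

definition I2 :: "(nat \<Rightarrow> nat \<Rightarrow> int) set" where
  "I2 = genideal ZSU
     { (u_var [^]\<^bsub>ZSU\<^esub> (4::nat) \<oplus>\<^bsub>ZSU\<^esub> u_var [^]\<^bsub>ZSU\<^esub> (4::nat) \<oplus>\<^bsub>ZSU\<^esub> u_var [^]\<^bsub>ZSU\<^esub> (4::nat))
        \<ominus>\<^bsub>ZSU\<^esub> (s_var \<otimes>\<^bsub>ZSU\<^esub> u_var [^]\<^bsub>ZSU\<^esub> (2::nat) \<oplus>\<^bsub>ZSU\<^esub> s_var \<otimes>\<^bsub>ZSU\<^esub> u_var [^]\<^bsub>ZSU\<^esub> (2::nat)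
             \<oplus>\<^bsub>ZSU\<^esub> s_var \<otimes>\<^bsub>ZSU\<^esub> u_var [^]\<^bsub>ZSU\<^esub> (2::nat))
        \<oplus>\<^bsub>ZSU\<^esub> s_var [^]\<^bsub>ZSU\<^esub> (2::nat),
       u_var [^]\<^bsub>ZSU\<^esub> (6::nat) }"

definition J2 :: "(nat \<Rightarrow> nat \<Rightarrow> int) set" where
  "J2 = genideal ZSU
     { s_var [^]\<^bsub>ZSU\<^esub> (2::nat) \<oplus>\<^bsub>ZSU\<^esub> s_var \<otimes>\<^bsub>ZSU\<^esub> u_var [^]\<^bsub>ZSU\<^esub> (2::nat)
        \<oplus>\<^bsub>ZSU\<^esub> u_var [^]\<^bsub>ZSU\<^esub> (4::nat),
       u_var [^]\<^bsub>ZSU\<^esub> (6::nat) }"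

end

theory Submission
  imports Defs
begin

text \<open>The substitution \<open>s \<mapsto> s + 2u\<^sup>2\<close>, \<open>u \<mapsto> u\<close> is a ring automorphism of \<open>\<int>[s,u]\<close>
  with inverse \<open>s \<mapsto> s - 2u\<^sup>2\<close>; since \<open>2u\<^sup>2\<close> has the same degree as \<open>s\<close>, both maps preserve
  the grading. It sends \<open>3u\<^sup>4 - 3su\<^sup>2 + s\<^sup>2\<close> to \<open>s\<^sup>2 + su\<^sup>2 + u\<^sup>4\<close> and fixes \<open>u\<^sup>6\<close>, so it maps
  \<open>I\<^sub>2\<close> onto \<open>J\<^sub>2\<close> and induces a graded isomorphism of the quotients.\<close>

lemma INTEG_simps [simp]:
  "\<zero>\<^bsub>INTEG\<^esub> = 0" "\<one>\<^bsub>INTEG\<^esub> = 1" "x \<oplus>\<^bsub>INTEG\<^esub> y = x + y" "x \<otimes>\<^bsub>INTEG\<^esub> y = x * y"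
  "carrier INTEG = UNIV"
  by (simp_all add: INTEG_def)

lemma INTEG_a_inv [simp]: "\<ominus>\<^bsub>INTEG\<^esub> x = - x"
  using INTEG.R.r_neg[of x] by simp

lemma INTEG_finsum_eq_sum: "finsum INTEG f A = sum f A"
proof (cases "finite A")
  case True
  then show ?thesis by (induction A rule: finite_induct) simp_all
next
  case False
  then show ?thesis by (simp add: INTEG.R.finsum_infinite)
qed

lemma Zs_cring: "cring Zs"
  using UP_cring.UP_cring INTEG_cring unfolding UP_cring_def by blast

lemma ZSU_cring: "cring ZSU"
  using UP_cring.UP_cring Zs_cring unfolding UP_cring_def by blast

lemma ZSU_ring: "ring ZSU"
  using ZSU_cring cring.axioms(1) by blast

interpretation ZSU: UP_cring Zs ZSU
  by (simp add: UP_cring_def Zs_cring)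

lemma s_var_carrier [simp]: "s_var \<in> carrier ZSU"
  by (simp add: s_var_def)

lemma u_var_carrier [simp]: "u_var \<in> carrier ZSU"
  by (simp add: u_var_def)

lemma coeff_coeff_ZSU_mult:
  assumes p: "p \<in> carrier ZSU" and q: "q \<in> carrier ZSU"
  shows "coeff Zs (coeff ZSU (p \<otimes>\<^bsub>ZSU\<^esub> q) j) i =
    (\<Sum>k\<le>j. \<Sum>l\<le>i. coeff Zs (coeff ZSU p k) l * coeff Zs (coeff ZSU q (j - k)) (i - l))"
proof -
  have "coeff Zs (coeff ZSU (p \<otimes>\<^bsub>ZSU\<^esub> q) j) i
      = coeff Zs (\<Oplus>\<^bsub>Zs\<^esub>k \<in> {..j}. coeff ZSU p k \<otimes>\<^bsub>Zs\<^esub> coeff ZSU q (j - k)) i"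
    using p q by simp
  also have "\<dots> = (\<Sum>k\<le>j. coeff Zs (coeff ZSU p k \<otimes>\<^bsub>Zs\<^esub> coeff ZSU q (j - k)) i)"
    using p q by (simp add: INTEG.coeff_finsum Pi_def INTEG_finsum_eq_sum del: INTEG.coeff_mult)
  also have "\<dots> = (\<Sum>k\<le>j. \<Sum>l\<le>i. coeff Zs (coeff ZSU p k) l * coeff Zs (coeff ZSU q (j - k)) (i - l))"
    using p q by (simp add: INTEG_finsum_eq_sum)
  finally show ?thesis .
qed

section \<open>Homogeneous polynomials\<close>

lemma homogeneous_carrier [simp]: "homogeneous d p \<Longrightarrow> p \<in> carrier ZSU"
  by (simp add: homogeneous_def)

lemma homogeneous_zero: "homogeneous d \<zero>\<^bsub>ZSU\<^esub>"
  by (simp add: homogeneous_def)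

lemma homogeneous_add:
  "homogeneous d p \<Longrightarrow> homogeneous d q \<Longrightarrow> homogeneous d (p \<oplus>\<^bsub>ZSU\<^esub> q)"
  unfolding homogeneous_def by (auto, metis add.left_neutral add.right_neutral)

lemma homogeneous_a_inv: "homogeneous d p \<Longrightarrow> homogeneous d (\<ominus>\<^bsub>ZSU\<^esub> p)"
  unfolding homogeneous_def by auto

lemma homogeneous_finsum:
  "finite A \<Longrightarrow> (\<And>x. x \<in> A \<Longrightarrow> homogeneous d (f x)) \<Longrightarrow> homogeneous d (finsum ZSU f A)"
proof (induction A rule: finite_induct)
  case empty
  then show ?case by (simp add: homogeneous_zero)
next
  case (insert x F)
  have "f \<in> F \<rightarrow> carrier ZSU" "f x \<in> carrier ZSU"
    using insert.prems homogeneous_carrier by blast+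
  then have "finsum ZSU f (insert x F) = f x \<oplus>\<^bsub>ZSU\<^esub> finsum ZSU f F"
    using insert.hyps by (simp add: ZSU.P.finsum_insert)
  then show ?case using insert by (simp add: homogeneous_add)
qed

lemma homogeneous_mult:
  assumes p: "homogeneous a p" and q: "homogeneous b q"
  shows "homogeneous (a + b) (p \<otimes>\<^bsub>ZSU\<^esub> q)"
  unfolding homogeneous_def
proof (intro conjI allI impI)
  show "p \<otimes>\<^bsub>ZSU\<^esub> q \<in> carrier ZSU" using p q by simp
  fix i j
  assume nonzero: "coeff Zs (coeff ZSU (p \<otimes>\<^bsub>ZSU\<^esub> q) j) i \<noteq> 0"
  have term_zero: "coeff Zs (coeff ZSU p k) l * coeff Zs (coeff ZSU q (j - k)) (i - l) = 0"
    if "k \<le> j" "l \<le> i" "4 * i + 2 * j \<noteq> a + b" for k l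
  proof (rule ccontr)
    assume "coeff Zs (coeff ZSU p k) l * coeff Zs (coeff ZSU q (j - k)) (i - l) \<noteq> 0"
    then have "4 * l + 2 * k = a" "4 * (i - l) + 2 * (j - k) = b"
      using p q unfolding homogeneous_def by auto
    with that show False by linarith
  qed
  show "4 * i + 2 * j = a + b"
  proof (rule ccontr)
    assume "4 * i + 2 * j \<noteq> a + b"
    then have "coeff Zs (coeff ZSU (p \<otimes>\<^bsub>ZSU\<^esub> q) j) i = 0"
      unfolding coeff_coeff_ZSU_mult[OF homogeneous_carrier[OF p] homogeneous_carrier[OF q]]
      using term_zero by (simp del: mult_eq_0_iff)
    with nonzero show False by contradiction
  qed
qed

lemma homogeneous_pow: "homogeneous d p \<Longrightarrow> homogeneous (d * n) (p [^]\<^bsub>ZSU\<^esub> n)"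
proof (induction n)
  case 0
  then show ?case by (simp add: homogeneous_def)
next
  case (Suc n)
  then have "homogeneous (d * n + d) (p [^]\<^bsub>ZSU\<^esub> n \<otimes>\<^bsub>ZSU\<^esub> p)"
    by (intro homogeneous_mult) auto
  then show ?case by (simp add: add.commute)
qed

lemma homogeneous_s_var: "homogeneous 4 s_var"
  by (simp add: homogeneous_def s_var_def)

lemma homogeneous_u_var: "homogeneous 2 u_var"
  by (simp add: homogeneous_def u_var_def)

section \<open>Substituting for \<open>s\<close>\<close>

definition int_const :: "int \<Rightarrow> nat \<Rightarrow> nat \<Rightarrow> int" where
  "int_const n = monom ZSU (monom Zs n 0) 0"

text \<open>\<open>subst_s \<sigma>\<close> is the endomorphism \<open>s \<mapsto> \<sigma>\<close>, \<open>u \<mapsto> u\<close> of \<open>\<int>[s][u]\<close>: the coefficients in \<open>\<int>[s]\<close>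
  are evaluated at \<open>\<sigma>\<close>, then \<open>u\<close> at \<open>u\<close>.\<close>

definition subst_coeffs :: "(nat \<Rightarrow> nat \<Rightarrow> int) \<Rightarrow> (nat \<Rightarrow> int) \<Rightarrow> nat \<Rightarrow> nat \<Rightarrow> int" where
  "subst_coeffs \<sigma> = eval INTEG ZSU int_const \<sigma>"

definition subst_s :: "(nat \<Rightarrow> nat \<Rightarrow> int) \<Rightarrow> (nat \<Rightarrow> nat \<Rightarrow> int) \<Rightarrow> nat \<Rightarrow> nat \<Rightarrow> int" where
  "subst_s \<sigma> = eval Zs ZSU (subst_coeffs \<sigma>) u_var"

lemma int_const_ring_hom: "int_const \<in> ring_hom INTEG ZSU"
proof -
  have "(\<lambda>a. monom ZSU a 0) \<circ> (\<lambda>a. monom Zs a 0) \<in> ring_hom INTEG ZSU"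
    by (rule ring_hom_trans[OF INTEG.const_ring_hom ZSU.const_ring_hom])
  then show ?thesis unfolding int_const_def[abs_def] by (simp add: comp_def)
qed

lemma int_const_zero [simp]: "int_const 0 = \<zero>\<^bsub>ZSU\<^esub>"
  using ring_hom_zero[OF int_const_ring_hom cring.axioms(1)[OF INTEG_cring] ZSU_ring] by simp

lemma int_const_one [simp]: "int_const 1 = \<one>\<^bsub>ZSU\<^esub>"
  using ring_hom_one[OF int_const_ring_hom] by simp

lemma homogeneous_int_const: "homogeneous 0 (int_const n)"
  by (simp add: homogeneous_def int_const_def)

lemma UP_pre_univ_prop_int_const: "UP_pre_univ_prop INTEG ZSU int_const"
  by (rule UP_pre_univ_propI[OF INTEG_cring ZSU_cring int_const_ring_hom])

lemma subst_coeffs_ring_hom: "\<sigma> \<in> carrier ZSU \<Longrightarrow> subst_coeffs \<sigma> \<in> ring_hom Zs ZSU"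
  unfolding subst_coeffs_def by (rule UP_pre_univ_prop.eval_ring_hom[OF UP_pre_univ_prop_int_const])

lemma UP_pre_univ_prop_subst_coeffs:
  "\<sigma> \<in> carrier ZSU \<Longrightarrow> UP_pre_univ_prop Zs ZSU (subst_coeffs \<sigma>)"
  by (rule UP_pre_univ_propI[OF Zs_cring ZSU_cring subst_coeffs_ring_hom])

lemma subst_s_ring_hom: "\<sigma> \<in> carrier ZSU \<Longrightarrow> subst_s \<sigma> \<in> ring_hom ZSU ZSU"
  unfolding subst_s_def
  by (rule UP_pre_univ_prop.eval_ring_hom[OF UP_pre_univ_prop_subst_coeffs]) simp_all

lemma subst_s_ring_hom_ring: "\<sigma> \<in> carrier ZSU \<Longrightarrow> ring_hom_ring ZSU ZSU (subst_s \<sigma>)"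
  by (rule ring_hom_ringI2[OF ZSU_ring ZSU_ring subst_s_ring_hom])

lemma subst_s_ring_hom_cring: "\<sigma> \<in> carrier ZSU \<Longrightarrow> ring_hom_cring ZSU ZSU (subst_s \<sigma>)"
  by (rule ring_hom_cringI[OF ZSU_cring ZSU_cring subst_s_ring_hom])

lemma subst_coeffs_monom:
  "\<sigma> \<in> carrier ZSU \<Longrightarrow> subst_coeffs \<sigma> (monom Zs n i) = int_const n \<otimes>\<^bsub>ZSU\<^esub> \<sigma> [^]\<^bsub>ZSU\<^esub> i"
  unfolding subst_coeffs_def
  by (rule UP_pre_univ_prop.eval_monom[OF UP_pre_univ_prop_int_const]) simp_all

lemma subst_s_monom: "\<sigma> \<in> carrier ZSU \<Longrightarrow> a \<in> carrier Zs \<Longrightarrow>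
   subst_s \<sigma> (monom ZSU a j) = subst_coeffs \<sigma> a \<otimes>\<^bsub>ZSU\<^esub> u_var [^]\<^bsub>ZSU\<^esub> j"
  unfolding subst_s_def
  by (rule UP_pre_univ_prop.eval_monom[OF UP_pre_univ_prop_subst_coeffs]) simp_all

lemma subst_s_s_var [simp]: "\<sigma> \<in> carrier ZSU \<Longrightarrow> subst_s \<sigma> s_var = \<sigma>"
  unfolding s_var_def by (simp add: subst_s_monom subst_coeffs_monom)

lemma subst_s_u_var [simp]:
  assumes "\<sigma> \<in> carrier ZSU" shows "subst_s \<sigma> u_var = u_var"
  using subst_s_monom[OF assms, of "\<one>\<^bsub>Zs\<^esub>" 1, folded u_var_def]
    ring_hom_one[OF subst_coeffs_ring_hom[OF assms]]
  by simp

lemma subst_s_int_const [simp]: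
  assumes "\<sigma> \<in> carrier ZSU" shows "subst_s \<sigma> (int_const n) = int_const n"
  using subst_s_monom[OF assms, of "monom Zs n 0" 0, folded int_const_def]
    subst_coeffs_monom[OF assms, of n 0]
  by (simp add: int_const_def)

lemma subst_s_u_var_pow [simp]:
  "\<sigma> \<in> carrier ZSU \<Longrightarrow> subst_s \<sigma> (u_var [^]\<^bsub>ZSU\<^esub> (n::nat)) = u_var [^]\<^bsub>ZSU\<^esub> n"
  using ring_hom_cring.hom_pow[OF subst_s_ring_hom_cring] by simp

lemma ZSU_ring_hom_eq_id:
  assumes F: "F \<in> ring_hom ZSU ZSU" and F_s: "F s_var = s_var" and F_u: "F u_var = u_var"
    and F_const: "\<And>n. F (int_const n) = int_const n" and p: "p \<in> carrier ZSU"
  shows "F p = p"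
proof -
  let ?E = "\<lambda>r. monom ZSU r 0"
  have E: "?E \<in> ring_hom Zs ZSU" by (rule ZSU.const_ring_hom)
  have F_E: "F (?E r) = ?E r" if r: "r \<in> carrier Zs" for r
  proof -
    have "(F \<circ> ?E) r = ?E r"
    proof (rule UP_pre_univ_prop.UP_hom_unique[OF UP_pre_univ_prop_int_const _ _ _ _ _ _ r])
      show "ring_hom_cring Zs ZSU (F \<circ> ?E)" "ring_hom_cring Zs ZSU ?E"
        by (rule ring_hom_cringI[OF Zs_cring ZSU_cring]; rule ring_hom_trans[OF E F] E)+
      show "(F \<circ> ?E) (monom Zs \<one>\<^bsub>INTEG\<^esub> (Suc 0)) = s_var"
        "?E (monom Zs \<one>\<^bsub>INTEG\<^esub> (Suc 0)) = s_var"
        using F_s by (simp_all add: s_var_def)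
      show "(F \<circ> ?E) (monom Zs n 0) = int_const n" "?E (monom Zs n 0) = int_const n" for n
        using F_const[of n] by (simp_all add: int_const_def)
    qed simp
    then show ?thesis by simp
  qed
  have "F p = id p"
  proof (rule UP_pre_univ_prop.UP_hom_unique[OF UP_pre_univ_propI[OF Zs_cring ZSU_cring E] _ _ _ _ _ _ p])
    show "ring_hom_cring ZSU ZSU F" "ring_hom_cring ZSU ZSU id"
      by (rule ring_hom_cringI[OF ZSU_cring ZSU_cring]; rule F id_ring_hom)+
    show "F (monom ZSU \<one>\<^bsub>Zs\<^esub> (Suc 0)) = u_var" "id (monom ZSU \<one>\<^bsub>Zs\<^esub> (Suc 0)) = u_var"
      using F_u by (simp_all add: u_var_def)
    show "F (?E r) = ?E r" "id (?E r) = ?E r" if "r \<in> carrier Zs" for r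
      using F_E that by simp_all
  qed simp
  then show ?thesis by simp
qed

lemma subst_s_subst_s_inverse:
  assumes \<alpha>: "\<alpha> \<in> carrier ZSU" and \<beta>: "\<beta> \<in> carrier ZSU" and \<alpha>\<beta>: "subst_s \<alpha> \<beta> = s_var"
    and p: "p \<in> carrier ZSU"
  shows "subst_s \<alpha> (subst_s \<beta> p) = p"
proof -
  have "(subst_s \<alpha> \<circ> subst_s \<beta>) p = p"
    by (rule ZSU_ring_hom_eq_id[OF ring_hom_trans[OF subst_s_ring_hom[OF \<beta>] subst_s_ring_hom[OF \<alpha>]] _ _ _ p])
      (simp_all add: \<alpha> \<beta> \<alpha>\<beta>)
  then show ?thesis by simp
qed

lemma homogeneous_int_const_monomial:
  assumes \<sigma>: "homogeneous 4 \<sigma>" and deg: "c \<noteq> 0 \<Longrightarrow> 4 * i + 2 * j = d"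
  shows "homogeneous d (int_const c \<otimes>\<^bsub>ZSU\<^esub> \<sigma> [^]\<^bsub>ZSU\<^esub> i \<otimes>\<^bsub>ZSU\<^esub> u_var [^]\<^bsub>ZSU\<^esub> j)"
proof (cases "c = 0")
  case True
  then show ?thesis using \<sigma> by (simp add: homogeneous_zero)
next
  case False
  have "homogeneous (0 + 4 * i + 2 * j)
      (int_const c \<otimes>\<^bsub>ZSU\<^esub> \<sigma> [^]\<^bsub>ZSU\<^esub> i \<otimes>\<^bsub>ZSU\<^esub> u_var [^]\<^bsub>ZSU\<^esub> j)"
    by (intro homogeneous_mult homogeneous_int_const homogeneous_pow[OF \<sigma>]
        homogeneous_pow[OF homogeneous_u_var])
  then show ?thesis using deg[OF False] by simp
qed

lemma homogeneous_subst_s: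
  assumes \<sigma>: "homogeneous 4 \<sigma>" and p: "homogeneous d p"
  shows "homogeneous d (subst_s \<sigma> p)"
proof -
  have \<sigma>_carrier: "\<sigma> \<in> carrier ZSU" and p_carrier: "p \<in> carrier ZSU" using \<sigma> p by auto
  have coeff_term: "homogeneous d (subst_coeffs \<sigma> (coeff ZSU p j) \<otimes>\<^bsub>ZSU\<^esub> u_var [^]\<^bsub>ZSU\<^esub> j)" for j
  proof -
    let ?q = "coeff ZSU p j"
    have expand: "subst_coeffs \<sigma> ?q \<otimes>\<^bsub>ZSU\<^esub> u_var [^]\<^bsub>ZSU\<^esub> j
       = (\<Oplus>\<^bsub>ZSU\<^esub>i \<in> {..deg INTEG ?q}.
            int_const (coeff Zs ?q i) \<otimes>\<^bsub>ZSU\<^esub> \<sigma> [^]\<^bsub>ZSU\<^esub> i \<otimes>\<^bsub>ZSU\<^esub> u_var [^]\<^bsub>ZSU\<^esub> j)"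
      unfolding subst_coeffs_def INTEG.eval_on_carrier[OF ZSU.coeff_closed[OF p_carrier]]
      by (rule ZSU.P.finsum_ldistr)
        (auto intro!: ZSU.P.m_closed ZSU.P.nat_pow_closed \<sigma>_carrier simp: int_const_def)
    show ?thesis unfolding expand
    proof (rule homogeneous_finsum[OF finite_atMost], rule homogeneous_int_const_monomial[OF \<sigma>])
      show "4 * i + 2 * j = d" if "coeff Zs ?q i \<noteq> 0" for i
        using p that unfolding homogeneous_def by blast
    qed
  qed
  show ?thesis
    unfolding subst_s_def ZSU.eval_on_carrier[OF p_carrier]
    by (rule homogeneous_finsum) (simp_all only: finite_atMost coeff_term)
qed

section \<open>Graded isomorphisms induced by graded automorphisms\<close>

lemma (in ring_hom_ring) genideal_image_subset:
  assumes J: "ideal J S" and A: "A \<subseteq> carrier R" and hA: "h ` A \<subseteq> J"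
  shows "h ` genideal R A \<subseteq> J"
proof -
  have "genideal R A \<subseteq> {r \<in> carrier R. h r \<in> J}"
    using A hA by (intro R.genideal_minimal ideal_vimage[OF J]) auto
  then show ?thesis by blast
qed

lemma image_homogeneous_eq:
  assumes F_grade: "\<And>p. homogeneous d p \<Longrightarrow> homogeneous d (F p)"
    and G_grade: "\<And>p. homogeneous d p \<Longrightarrow> homogeneous d (G p)"
    and FG: "\<And>p. p \<in> carrier ZSU \<Longrightarrow> F (G p) = p"
  shows "F ` {p. homogeneous d p} = {p. homogeneous d p}"
proof
  show "F ` {p. homogeneous d p} \<subseteq> {p. homogeneous d p}" using F_grade by blast
  show "{p. homogeneous d p} \<subseteq> F ` {p. homogeneous d p}"
  proof
    fix q assume "q \<in> {p. homogeneous d p}"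
    then have "q = F (G q)" "homogeneous d (G q)" using FG G_grade by simp_all
    then show "q \<in> F ` {p. homogeneous d p}" by blast
  qed
qed

lemma graded_quot_iso_by_automorphism:
  assumes F: "F \<in> ring_hom ZSU ZSU" and G: "G \<in> ring_hom ZSU ZSU"
    and GF: "\<And>p. p \<in> carrier ZSU \<Longrightarrow> G (F p) = p"
    and FG: "\<And>p. p \<in> carrier ZSU \<Longrightarrow> F (G p) = p"
    and F_grade: "\<And>d p. homogeneous d p \<Longrightarrow> homogeneous d (F p)"
    and G_grade: "\<And>d p. homogeneous d p \<Longrightarrow> homogeneous d (G p)"
    and I: "ideal I ZSU" and J: "ideal J ZSU" and FI: "F ` I \<subseteq> J" and GJ: "G ` J \<subseteq> I"
  shows "graded_quot_iso I J"
proof -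
  interpret I: ideal I ZSU by (rule I)
  interpret J: ideal J ZSU by (rule J)
  define \<pi> where "\<pi> p = J +>\<^bsub>ZSU\<^esub> F p" for p
  have \<pi>_hom: "ring_hom_ring ZSU (ZSU Quot J) \<pi>"
    unfolding \<pi>_def[abs_def]
    by (rule ring_hom_ringI2[OF ZSU_ring J.quotient_is_ring ring_hom_trans[OF F J.rcos_ring_hom,
          unfolded comp_def]])
  have F_carrier: "F p \<in> carrier ZSU" if "p \<in> carrier ZSU" for p
    using ring_hom_closed[OF F that] .
  have kernel: "a_kernel ZSU (ZSU Quot J) \<pi> = I"
  proof -
    have "a_kernel ZSU (ZSU Quot J) \<pi> = {p \<in> carrier ZSU. F p \<in> J}"
      unfolding a_kernel_def' \<pi>_def using F_carrier J.rcos_const_imp_mem ZSU.P.a_rcos_zero[OF J]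
      by (auto simp: FactRing_def)
    also have "\<dots> = I" using FI GJ GF I.Icarr by force
    finally show ?thesis .
  qed
  have surj: "\<pi> ` carrier ZSU = carrier (ZSU Quot J)"
  proof
    show "\<pi> ` carrier ZSU \<subseteq> carrier (ZSU Quot J)"
      using ring_hom_closed[OF ring_hom_ring.homh[OF \<pi>_hom]] by blast
    show "carrier (ZSU Quot J) \<subseteq> \<pi> ` carrier ZSU"
    proof
      fix X assume "X \<in> carrier (ZSU Quot J)"
      then obtain q where q: "q \<in> carrier ZSU" "X = J +>\<^bsub>ZSU\<^esub> q"
        unfolding FactRing_def A_RCOSETS_def' by auto
      then have "X = \<pi> (G q)" "G q \<in> carrier ZSU" using FG ring_hom_closed[OF G] by (simp_all add: \<pi>_def)
      then show "X \<in> \<pi> ` carrier ZSU" by blast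
    qed
  qed
  let ?H = "\<lambda>X. the_elem (\<pi> ` X)"
  have "?H \<in> ring_iso (ZSU Quot I) (ZSU Quot J)"
    using ring_hom_ring.FactRing_iso_set[OF \<pi>_hom surj] by (simp add: kernel)
  moreover have "?H ` quot_grade I d = quot_grade J d" for d
  proof -
    have "?H (I +>\<^bsub>ZSU\<^esub> p) = J +>\<^bsub>ZSU\<^esub> F p" if "p \<in> carrier ZSU" for p
      using ring_hom_ring.the_elem_simp[OF \<pi>_hom that] by (simp add: kernel \<pi>_def)
    then have "?H ` quot_grade I d = (\<lambda>q. J +>\<^bsub>ZSU\<^esub> q) ` (F ` {p. homogeneous d p})"
      unfolding quot_grade_def image_image by (auto intro!: image_cong)
    then show ?thesis
      using image_homogeneous_eq[OF F_grade G_grade FG] by (simp add: quot_grade_def)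
  qed
  ultimately show ?thesis unfolding graded_quot_iso_def by blast
qed

section \<open>The shift \<open>s \<mapsto> s + 2u\<^sup>2\<close>\<close>

lemma (in cring) quadratic_shift_identity:
  assumes s: "s \<in> carrier R" and u: "u \<in> carrier R" and t: "t = s \<oplus> (u [^] (2::nat) \<oplus> u [^] (2::nat))"
  shows "(u [^] (4::nat) \<oplus> u [^] (4::nat) \<oplus> u [^] (4::nat))
        \<ominus> (t \<otimes> u [^] (2::nat) \<oplus> t \<otimes> u [^] (2::nat) \<oplus> t \<otimes> u [^] (2::nat)) \<oplus> t [^] (2::nat)
    = s [^] (2::nat) \<oplus> s \<otimes> u [^] (2::nat) \<oplus> u [^] (4::nat)"
proof -
  define v where "v = u [^] (2::nat)"
  have v: "v \<in> carrier R" using u by (simp add: v_def)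
  have square: "x [^] (2::nat) = x \<otimes> x" if "x \<in> carrier R" for x
    using that by (simp add: numeral_2_eq_2)
  have u4: "u [^] (4::nat) = v \<otimes> v" using u by (simp add: v_def nat_pow_mult)
  have squares: "t [^] (2::nat) = t \<otimes> t" "s [^] (2::nat) = s \<otimes> s"
    using s v by (simp_all add: t v_def square)
  show ?thesis unfolding squares u4 unfolding t v_def[symmetric] using s v by algebra
qed

definition two_u_sq :: "nat \<Rightarrow> nat \<Rightarrow> int" where
  "two_u_sq = u_var [^]\<^bsub>ZSU\<^esub> (2::nat) \<oplus>\<^bsub>ZSU\<^esub> u_var [^]\<^bsub>ZSU\<^esub> (2::nat)"

lemma two_u_sq_carrier [simp]: "two_u_sq \<in> carrier ZSU"
  by (simp add: two_u_sq_def)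

lemma homogeneous_two_u_sq: "homogeneous 4 two_u_sq"
  unfolding two_u_sq_def
  using homogeneous_add[OF homogeneous_pow[OF homogeneous_u_var, of 2] homogeneous_pow[OF homogeneous_u_var, of 2]]
  by simp

lemma subst_s_two_u_sq [simp]: "\<sigma> \<in> carrier ZSU \<Longrightarrow> subst_s \<sigma> two_u_sq = two_u_sq"
  unfolding two_u_sq_def by (simp add: ring_hom_add[OF subst_s_ring_hom])

lemma homogeneous_s_var_shift:
  "homogeneous 4 (s_var \<oplus>\<^bsub>ZSU\<^esub> two_u_sq)" "homogeneous 4 (s_var \<ominus>\<^bsub>ZSU\<^esub> two_u_sq)"
  unfolding a_minus_def
  by (intro homogeneous_add homogeneous_s_var homogeneous_a_inv homogeneous_two_u_sq)+

lemma subst_s_shift_inverse: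
  assumes p: "p \<in> carrier ZSU"
  shows "subst_s (s_var \<ominus>\<^bsub>ZSU\<^esub> two_u_sq) (subst_s (s_var \<oplus>\<^bsub>ZSU\<^esub> two_u_sq) p) = p"
    and "subst_s (s_var \<oplus>\<^bsub>ZSU\<^esub> two_u_sq) (subst_s (s_var \<ominus>\<^bsub>ZSU\<^esub> two_u_sq) p) = p"
proof -
  have "subst_s (s_var \<ominus>\<^bsub>ZSU\<^esub> two_u_sq) (s_var \<oplus>\<^bsub>ZSU\<^esub> two_u_sq) = s_var"
    by (simp add: ring_hom_add[OF subst_s_ring_hom] a_minus_def ZSU.P.a_assoc ZSU.P.l_neg)
  then show "subst_s (s_var \<ominus>\<^bsub>ZSU\<^esub> two_u_sq) (subst_s (s_var \<oplus>\<^bsub>ZSU\<^esub> two_u_sq) p) = p"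
    using p by (intro subst_s_subst_s_inverse) simp_all
  have "subst_s (s_var \<oplus>\<^bsub>ZSU\<^esub> two_u_sq) (s_var \<ominus>\<^bsub>ZSU\<^esub> two_u_sq) = s_var"
    by (simp add: ring_hom_add[OF subst_s_ring_hom] ring_hom_cring.hom_a_inv[OF subst_s_ring_hom_cring]
        a_minus_def ZSU.P.a_assoc ZSU.P.r_neg)
  then show "subst_s (s_var \<oplus>\<^bsub>ZSU\<^esub> two_u_sq) (subst_s (s_var \<ominus>\<^bsub>ZSU\<^esub> two_u_sq) p) = p"
    using p by (intro subst_s_subst_s_inverse) simp_all
qed

definition I2_quadric :: "nat \<Rightarrow> nat \<Rightarrow> int" where
  "I2_quadric = (u_var [^]\<^bsub>ZSU\<^esub> (4::nat) \<oplus>\<^bsub>ZSU\<^esub> u_var [^]\<^bsub>ZSU\<^esub> (4::nat) \<oplus>\<^bsub>ZSU\<^esub> u_var [^]\<^bsub>ZSU\<^esub> (4::nat))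
     \<ominus>\<^bsub>ZSU\<^esub> (s_var \<otimes>\<^bsub>ZSU\<^esub> u_var [^]\<^bsub>ZSU\<^esub> (2::nat) \<oplus>\<^bsub>ZSU\<^esub> s_var \<otimes>\<^bsub>ZSU\<^esub> u_var [^]\<^bsub>ZSU\<^esub> (2::nat)
          \<oplus>\<^bsub>ZSU\<^esub> s_var \<otimes>\<^bsub>ZSU\<^esub> u_var [^]\<^bsub>ZSU\<^esub> (2::nat))
     \<oplus>\<^bsub>ZSU\<^esub> s_var [^]\<^bsub>ZSU\<^esub> (2::nat)"

definition J2_quadric :: "nat \<Rightarrow> nat \<Rightarrow> int" where
  "J2_quadric = s_var [^]\<^bsub>ZSU\<^esub> (2::nat) \<oplus>\<^bsub>ZSU\<^esub> s_var \<otimes>\<^bsub>ZSU\<^esub> u_var [^]\<^bsub>ZSU\<^esub> (2::nat)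
     \<oplus>\<^bsub>ZSU\<^esub> u_var [^]\<^bsub>ZSU\<^esub> (4::nat)"

lemma I2_eq_genideal: "I2 = genideal ZSU {I2_quadric, u_var [^]\<^bsub>ZSU\<^esub> (6::nat)}"
  by (simp add: I2_def I2_quadric_def)

lemma J2_eq_genideal: "J2 = genideal ZSU {J2_quadric, u_var [^]\<^bsub>ZSU\<^esub> (6::nat)}"
  by (simp add: J2_def J2_quadric_def)

lemma ideal_I2: "ideal I2 ZSU"
  unfolding I2_eq_genideal by (rule ZSU.P.genideal_ideal) (simp add: I2_quadric_def)

lemma ideal_J2: "ideal J2 ZSU"
  unfolding J2_eq_genideal by (rule ZSU.P.genideal_ideal) (simp add: J2_quadric_def)

lemma I2_quadric_carrier [simp]: "I2_quadric \<in> carrier ZSU"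
  by (simp add: I2_quadric_def)

lemma J2_quadric_carrier [simp]: "J2_quadric \<in> carrier ZSU"
  by (simp add: J2_quadric_def)

lemma subst_s_shift_I2_quadric: "subst_s (s_var \<oplus>\<^bsub>ZSU\<^esub> two_u_sq) I2_quadric = J2_quadric"
proof -
  let ?t = "s_var \<oplus>\<^bsub>ZSU\<^esub> two_u_sq"
  interpret subst: ring_hom_cring ZSU ZSU "subst_s ?t"
    by (rule subst_s_ring_hom_cring) simp
  have "subst_s ?t I2_quadric =
      (u_var [^]\<^bsub>ZSU\<^esub> (4::nat) \<oplus>\<^bsub>ZSU\<^esub> u_var [^]\<^bsub>ZSU\<^esub> (4::nat) \<oplus>\<^bsub>ZSU\<^esub> u_var [^]\<^bsub>ZSU\<^esub> (4::nat))
      \<ominus>\<^bsub>ZSU\<^esub> (?t \<otimes>\<^bsub>ZSU\<^esub> u_var [^]\<^bsub>ZSU\<^esub> (2::nat) \<oplus>\<^bsub>ZSU\<^esub> ?t \<otimes>\<^bsub>ZSU\<^esub> u_var [^]\<^bsub>ZSU\<^esub> (2::nat)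
           \<oplus>\<^bsub>ZSU\<^esub> ?t \<otimes>\<^bsub>ZSU\<^esub> u_var [^]\<^bsub>ZSU\<^esub> (2::nat))
      \<oplus>\<^bsub>ZSU\<^esub> ?t [^]\<^bsub>ZSU\<^esub> (2::nat)"
    unfolding I2_quadric_def a_minus_def by (simp add: subst.hom_add subst.hom_mult subst.hom_pow)
  also have "\<dots> = J2_quadric"
    unfolding J2_quadric_def
    by (rule ZSU.P.quadratic_shift_identity) (simp_all add: two_u_sq_def)
  finally show ?thesis .
qed

lemma subst_s_unshift_J2_quadric: "subst_s (s_var \<ominus>\<^bsub>ZSU\<^esub> two_u_sq) J2_quadric = I2_quadric"
  using subst_s_shift_inverse(1)[OF I2_quadric_carrier] by (simp add: subst_s_shift_I2_quadric)

theorem proposition5p4: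
  shows "graded_quot_iso I2 J2"
proof (rule graded_quot_iso_by_automorphism)
  show "subst_s (s_var \<oplus>\<^bsub>ZSU\<^esub> two_u_sq) ` I2 \<subseteq> J2"
    unfolding I2_eq_genideal
    by (rule ring_hom_ring.genideal_image_subset[OF subst_s_ring_hom_ring ideal_J2])
      (auto simp: subst_s_shift_I2_quadric J2_eq_genideal intro!: ZSU.P.genideal_self[THEN subsetD])
  show "subst_s (s_var \<ominus>\<^bsub>ZSU\<^esub> two_u_sq) ` J2 \<subseteq> I2"
    unfolding J2_eq_genideal
    by (rule ring_hom_ring.genideal_image_subset[OF subst_s_ring_hom_ring ideal_I2])
      (auto simp: subst_s_unshift_J2_quadric I2_eq_genideal intro!: ZSU.P.genideal_self[THEN subsetD])
qed (simp_all add: subst_s_ring_hom subst_s_shift_inverse homogeneous_subst_s homogeneous_s_var_shift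
      ideal_I2 ideal_J2)

end
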